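(* Let $L\in\mathbb{R}^{m\times m}$ satisfy $\|\mathrm{e}^{\omega L}\|_\infty\le 1$ for all $\omega>0$. Let $\rho>0$ and let $f:[-\rho,\rho]\to\mathbb{R}$ (acting componentwise on vectors) satisfy (F+) there exists $\omega_0^+>0$ such that $|\xi+\omega f(\xi)|\le\rho$ for all $\xi\in[-\rho,\rho]$ and all $\omega\in(0,\omega_0^+]$; (F$-$) there exists $\omega_0^->0$ such that $|\xi-\omega f(\xi)|\le\rho$ for all $\xi\in[-\rho,\rho]$ and all $\omega\in(0,\omega_0^-]$. Consider the $s$-stage IFRK step $$u^{(0)}=u^n,\qquad u^{(i)}=\sum_{j=0}^{i-1}\mathrm{e}^{(c_i-c_j)\tau L}\big[\alpha_{ij}u^{(j)}+\tau\beta_{ij}f(u^{(j)})\big],\ 1\le i\le s,\qquad u^{n+1}=u^{(s)},$$ where the coefficients satisfy $\alpha_{ij}\ge 0$, $\sum_{j=0}^{i-1}\alpha_{ij}=1$ for each $i$, $\beta_{ij}=0$ whenever $\alpha_{ij}=0$, and the abscissas are non-decreasing: $c_0\le c_1\le\cdots\le c_s$. Suppose $\|u^n\|_\infty\le\rho$. If all $\beta_{ij}\ge 0$ and $$\tau\le \mathcal{C}\,\omega_0^+,\qquad \mathcal{C}=\min_{(i,j):\,\beta_{ij}>0}\frac{\alpha_{ij}}{\beta_{ij}},$$ or if some $\beta_{ij}<0$ and $$\tau\le \mathcal{C}\,\min\{\omega_0^+,\omega_0^-\},\qquad \mathcal{C}=\min_{(i,j):\,\beta_{ij}\neq 0}\frac{\alpha_{ij}}{|\beta_{ij}|},$$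 then $\|u^{(i)}\|_\infty\le\rho$ for all $i$, and in particular $\|u^{n+1}\|_\infty\le\rho$.
   Context: $\|\cdot\|_\infty$ denotes the vector $\infty$-norm on $\mathbb{R}^m$ and the induced matrix norm. For $u\in\mathbb{R}^m$, $f(u)$ denotes the vector with components $f(u_j)$. $\tau>0$ is the time step size. This step discretizes the ODE system $\frac{du}{dt}=Lu+f(u)$. *)

theory Defs
  imports "HOL-Analysis.Analysis"
begin

definition mat_pow :: "real^'m^'m \<Rightarrow> nat \<Rightarrow> real^'m^'m" where
  "mat_pow A k = ((\<lambda>B. A ** B) ^^ k) (mat 1)"

definition mat_exp :: "real^'m^'m \<Rightarrow> real^'m^'m" where
  "mat_exp A = (\<Sum>k. (1 / fact k) *\<^sub>R mat_pow A k)"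

definition vnorm_inf :: "real^'m \<Rightarrow> real" where
  "vnorm_inf x = Max (range (\<lambda>i. \<bar>x $ i\<bar>))"

definition mnorm_inf :: "real^'m^'m \<Rightarrow> real" where
  "mnorm_inf A = Sup ((\<lambda>x. vnorm_inf (A *v x)) ` {x. vnorm_inf x \<le> 1})"

definition fvec :: "(real \<Rightarrow> real) \<Rightarrow> real^'m \<Rightarrow> real^'m" where
  "fvec f u = (\<chi> k. f (u $ k))"

end

theory Submission
  imports Defs
begin

text \<open>
  Each stage \<open>u\<^sup>(\<^sup>i\<^sup>)\<close> is a convex combination, with weights \<open>\<alpha> i j\<close>, of the vectors
  \<open>exp ((c i - c j) \<tau> L) (u\<^sup>(\<^sup>j\<^sup>) + (\<tau> \<beta> i j / \<alpha> i j) f(u\<^sup>(\<^sup>j\<^sup>)))\<close>. The step size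
  restriction makes \<open>\<tau> \<bar>\<beta> i j\<bar> / \<alpha> i j\<close> an admissible step in (F+) or (F\<open>-\<close>), according to the
  sign of \<open>\<beta> i j\<close>, so the Euler step keeps every component in \<open>[-\<rho>, \<rho>]\<close>. Since
  \<open>c j \<le> c i\<close>, the exponential does not increase the \<open>\<infinity>\<close>-norm, and neither does the
  convex combination; induction over the stages concludes.
\<close>

lemma component_le_vnorm_inf: "\<bar>x $ i\<bar> \<le> vnorm_inf x"
  unfolding vnorm_inf_def by (rule Max_ge) auto

lemma vnorm_inf_nonneg: "0 \<le> vnorm_inf x"
  by (rule order_trans[OF abs_ge_zero component_le_vnorm_inf])

lemma vnorm_inf_le_iff: "vnorm_inf x \<le> r \<longleftrightarrow> (\<forall>i. \<bar>x $ i\<bar> \<le> r)"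
  unfolding vnorm_inf_def by (subst Max_le_iff) auto

lemma bdd_above_mnorm_inf:
  fixes A :: "real^'n^'m"
  shows "bdd_above ((\<lambda>x. vnorm_inf (A *v x)) ` {x. vnorm_inf x \<le> 1})"
proof -
  obtain B where B: "B > 0" "\<And>x. norm (A *v x) \<le> B * norm x"
    by (rule linear_bounded_pos[OF matrix_vector_mul_linear[of A]]) blast
  have "vnorm_inf (A *v x) \<le> B * real CARD('n)" if "vnorm_inf x \<le> 1" for x :: "real^'n"
  proof -
    have "norm x \<le> (\<Sum>i\<in>UNIV. \<bar>x $ i\<bar>)" by (rule norm_le_l1_cart)
    also have "\<dots> \<le> (\<Sum>i\<in>(UNIV :: 'n set). 1)"
      using that by (intro sum_mono) (simp add: vnorm_inf_le_iff)
    finally have "norm x \<le> real CARD('n)" by simp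
    then have "norm (A *v x) \<le> B * real CARD('n)"
      using B by (meson mult_left_mono less_imp_le order_trans)
    then show ?thesis
      unfolding vnorm_inf_le_iff using component_le_norm_cart[of "A *v x"] by (meson order_trans)
  qed
  then show ?thesis by (auto simp: bdd_above_def)
qed

lemma mnorm_inf_upper:
  assumes "vnorm_inf x \<le> 1"
  shows "vnorm_inf (A *v x) \<le> mnorm_inf A"
  unfolding mnorm_inf_def
  by (rule cSup_upper[OF imageI bdd_above_mnorm_inf]) (simp add: assms)

lemma vnorm_inf_zero [simp]: "vnorm_inf 0 = 0"
  using vnorm_inf_nonneg[of 0] by (simp add: vnorm_inf_le_iff eq_iff)

lemma mnorm_inf_nonneg: "0 \<le> mnorm_inf A"
  using mnorm_inf_upper[of 0 A] by simp

lemma vnorm_inf_matrix_vector_mult_le: "vnorm_inf (A *v x) \<le> mnorm_inf A * vnorm_inf x"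
proof (cases "x = 0")
  case True
  then show ?thesis by (simp add: mnorm_inf_nonneg)
next
  case False
  define r where "r = vnorm_inf x"
  obtain i where "x $ i \<noteq> 0" using False by (metis vec_eq_iff zero_index)
  then have r: "r > 0" using component_le_vnorm_inf[of x i] unfolding r_def by linarith
  have "vnorm_inf ((1 / r) *\<^sub>R x) \<le> 1"
    using r component_le_vnorm_inf[of x] by (auto simp: vnorm_inf_le_iff r_def field_simps)
  then have "vnorm_inf ((1 / r) *\<^sub>R (A *v x)) \<le> mnorm_inf A"
    unfolding matrix_vector_mult_scaleR[symmetric] by (rule mnorm_inf_upper)
  then show ?thesis
    using r by (auto simp: vnorm_inf_le_iff abs_mult field_simps r_def[symmetric])
qed

lemma mnorm_inf_mat_1_le: "mnorm_inf (mat 1 :: real^'n^'n) \<le> 1"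
  unfolding mnorm_inf_def
  by (rule cSup_least) (auto simp: vnorm_inf_le_iff intro!: exI[where x = 0])

lemma mat_exp_0: "mat_exp (0 :: real^'n^'n) = mat 1"
proof -
  have "mat_pow 0 k = (if k = 0 then mat 1 else (0 :: real^'n^'n))" for k
    by (cases k) (auto simp: mat_pow_def)
  then have "(\<lambda>k. (1 / fact k) *\<^sub>R mat_pow (0 :: real^'n^'n) k)
      = (\<lambda>k. if k = 0 then mat 1 else 0)"
    by auto
  then have "(\<lambda>k. (1 / fact k) *\<^sub>R mat_pow (0 :: real^'n^'n) k) sums mat 1"
    using sums_single[of 0 "\<lambda>_. mat 1 :: real^'n^'n"] by simp
  then show ?thesis unfolding mat_exp_def by (simp add: sums_iff)
qed

lemma mnorm_inf_mat_exp_le_1: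
  assumes "\<And>\<omega>. \<omega> > 0 \<Longrightarrow> mnorm_inf (mat_exp (\<omega> *\<^sub>R L)) \<le> 1" and "\<omega> \<ge> 0"
  shows "mnorm_inf (mat_exp (\<omega> *\<^sub>R L)) \<le> 1"
  using assms mnorm_inf_mat_1_le by (cases "\<omega> = 0") (auto simp: mat_exp_0)

lemma vnorm_inf_convex_combination_le:
  assumes "\<And>j. j \<in> J \<Longrightarrow> mnorm_inf (E j) \<le> 1"
    and "\<And>j. j \<in> J \<Longrightarrow> vnorm_inf (w j) \<le> a j * \<rho>"
    and "(\<Sum>j\<in>J. a j) = 1"
  shows "vnorm_inf (\<Sum>j\<in>J. E j *v w j) \<le> \<rho>"
  unfolding vnorm_inf_le_iff
proof
  fix k
  have "\<bar>(\<Sum>j\<in>J. E j *v w j) $ k\<bar> \<le> (\<Sum>j\<in>J. \<bar>(E j *v w j) $ k\<bar>)"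
    by (simp add: sum_abs)
  also have "\<dots> \<le> (\<Sum>j\<in>J. a j * \<rho>)"
  proof (rule sum_mono)
    fix j assume j: "j \<in> J"
    have "\<bar>(E j *v w j) $ k\<bar> \<le> mnorm_inf (E j) * vnorm_inf (w j)"
      by (rule order_trans[OF component_le_vnorm_inf vnorm_inf_matrix_vector_mult_le])
    also have "\<dots> \<le> vnorm_inf (w j)"
      using assms(1)[OF j] vnorm_inf_nonneg mult_left_le_one_le mnorm_inf_nonneg by blast
    finally show "\<bar>(E j *v w j) $ k\<bar> \<le> a j * \<rho>" using assms(2)[OF j] by linarith
  qed
  also have "\<dots> = \<rho>" using assms(3) by (simp add: sum_distrib_right[symmetric])
  finally show "\<bar>(\<Sum>j\<in>J. E j *v w j) $ k\<bar> \<le> \<rho>" .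
qed

text \<open>For \<open>b \<noteq> 0\<close> the step size bound forces \<open>a > 0\<close>, and the combination is \<open>a\<close> times
  an Euler step of length \<open>\<tau> \<bar>b\<bar> / a\<close>, forward or backward according to the sign of \<open>b\<close>.\<close>

lemma abs_euler_combination_le:
  fixes f :: "real \<Rightarrow> real"
  assumes Fplus: "\<And>\<xi> \<omega>. \<bar>\<xi>\<bar> \<le> \<rho> \<Longrightarrow> 0 < \<omega> \<Longrightarrow> \<omega> \<le> \<omega>p \<Longrightarrow> \<bar>\<xi> + \<omega> * f \<xi>\<bar> \<le> \<rho>"
    and Fminus: "\<And>\<xi> \<omega>. \<bar>\<xi>\<bar> \<le> \<rho> \<Longrightarrow> 0 < \<omega> \<Longrightarrow> \<omega> \<le> \<omega>m \<Longrightarrow> \<bar>\<xi> - \<omega> * f \<xi>\<bar> \<le> \<rho>"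
    and \<xi>: "\<bar>\<xi>\<bar> \<le> \<rho>" and a: "0 \<le> a" and \<tau>: "0 < \<tau>"
    and pos: "b > 0 \<Longrightarrow> \<tau> * b \<le> a * \<omega>p"
    and neg: "b < 0 \<Longrightarrow> \<tau> * \<bar>b\<bar> \<le> a * \<omega>m"
  shows "\<bar>a * \<xi> + (\<tau> * b) * f \<xi>\<bar> \<le> a * \<rho>"
proof (cases "b = 0")
  case True
  then show ?thesis using \<xi> a by (simp add: abs_mult mult_left_mono)
next
  case False
  define \<omega> where "\<omega> = \<tau> * \<bar>b\<bar> / a"
  have "0 < \<tau> * \<bar>b\<bar>" using False \<tau> by simp
  then have a_pos: "0 < a"
    using a pos neg False by (cases "b > 0") (auto intro: ccontr)
  have \<omega>_pos: "0 < \<omega>" using \<open>0 < \<tau> * \<bar>b\<bar>\<close> a_pos by (simp add: \<omega>_def)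
  have "\<bar>\<xi> + sgn b * \<omega> * f \<xi>\<bar> \<le> \<rho>"
  proof (cases "b > 0")
    case True
    then have "\<omega> \<le> \<omega>p" using pos a_pos by (simp add: \<omega>_def field_simps)
    then show ?thesis using Fplus[OF \<xi> \<omega>_pos] True by simp
  next
    case False
    then have "b < 0" using \<open>b \<noteq> 0\<close> by simp
    then have "\<omega> \<le> \<omega>m" using neg a_pos by (simp add: \<omega>_def field_simps)
    then show ?thesis using Fminus[OF \<xi> \<omega>_pos] \<open>b < 0\<close> by simp
  qed
  moreover have "a * (\<xi> + sgn b * \<omega> * f \<xi>) = a * \<xi> + \<tau> * (sgn b * \<bar>b\<bar>) * f \<xi>"
    using a_pos by (simp add: \<omega>_def field_simps)
  then have "a * \<xi> + (\<tau> * b) * f \<xi> = a * (\<xi> + sgn b * \<omega> * f \<xi>)"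
    by (simp add: sgn_mult_abs)
  ultimately show ?thesis using a_pos by (simp add: abs_mult)
qed

lemma vnorm_inf_euler_combination_le:
  assumes "\<And>\<xi> \<omega>. \<bar>\<xi>\<bar> \<le> \<rho> \<Longrightarrow> 0 < \<omega> \<Longrightarrow> \<omega> \<le> \<omega>p \<Longrightarrow> \<bar>\<xi> + \<omega> * f \<xi>\<bar> \<le> \<rho>"
    and "\<And>\<xi> \<omega>. \<bar>\<xi>\<bar> \<le> \<rho> \<Longrightarrow> 0 < \<omega> \<Longrightarrow> \<omega> \<le> \<omega>m \<Longrightarrow> \<bar>\<xi> - \<omega> * f \<xi>\<bar> \<le> \<rho>"
    and "vnorm_inf u \<le> \<rho>" "0 \<le> a" "0 < \<tau>"
    and "b > 0 \<Longrightarrow> \<tau> * b \<le> a * \<omega>p" "b < 0 \<Longrightarrow> \<tau> * \<bar>b\<bar> \<le> a * \<omega>m"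
  shows "vnorm_inf (a *\<^sub>R u + (\<tau> * b) *\<^sub>R fvec f u) \<le> a * \<rho>"
  using abs_euler_combination_le[OF assms(1,2) _ assms(4-7)] assms(3)
  by (simp add: vnorm_inf_le_iff fvec_def)

lemma step_restriction_bounds:
  fixes a b :: "'i \<Rightarrow> 'j \<Rightarrow> real" and \<tau> \<omega>p \<omega>m :: real
  assumes "((\<forall>i j. P i j \<longrightarrow> b i j \<ge> 0) \<and>
             (\<forall>i j. P i j \<and> b i j > 0 \<longrightarrow> \<tau> \<le> (a i j / b i j) * \<omega>p))
         \<or> ((\<exists>i j. P i j \<and> b i j < 0) \<and>
             (\<forall>i j. P i j \<and> b i j \<noteq> 0 \<longrightarrow> \<tau> \<le> (a i j / \<bar>b i j\<bar>) * min \<omega>p \<omega>m))"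
    and "P i j" "0 \<le> a i j"
  shows "b i j > 0 \<Longrightarrow> \<tau> * b i j \<le> a i j * \<omega>p"
    and "b i j < 0 \<Longrightarrow> \<tau> * \<bar>b i j\<bar> \<le> a i j * \<omega>m"
proof -
  have scale: "\<tau> * y \<le> x * z" if "\<tau> \<le> x / y * z" "0 < y" for x y z :: real
    using that by (simp add: field_simps)
  have min: "a i j * min \<omega>p \<omega>m \<le> a i j * \<omega>p" "a i j * min \<omega>p \<omega>m \<le> a i j * \<omega>m"
    using \<open>0 \<le> a i j\<close> by (simp_all add: mult_left_mono)
  have signed_bound: "\<tau> * \<bar>b i j\<bar> \<le> a i j * min \<omega>p \<omega>m"
    if "\<forall>i j. P i j \<and> b i j \<noteq> 0 \<longrightarrow> \<tau> \<le> (a i j / \<bar>b i j\<bar>) * min \<omega>p \<omega>m" "b i j \<noteq> 0"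
    using that \<open>P i j\<close> by (intro scale) auto
  consider (nonneg) "\<forall>i j. P i j \<longrightarrow> b i j \<ge> 0"
      "\<forall>i j. P i j \<and> b i j > 0 \<longrightarrow> \<tau> \<le> (a i j / b i j) * \<omega>p"
    | (signed) "\<forall>i j. P i j \<and> b i j \<noteq> 0 \<longrightarrow> \<tau> \<le> (a i j / \<bar>b i j\<bar>) * min \<omega>p \<omega>m"
    using assms(1) by blast
  note restriction = this
  show "\<tau> * b i j \<le> a i j * \<omega>p" if "b i j > 0"
    using restriction
  proof cases
    case nonneg
    then show ?thesis using \<open>P i j\<close> that by (intro scale) auto
  next
    case signed
    then show ?thesis using signed_bound min that by fastforce
  qed
  show "\<tau> * \<bar>b i j\<bar> \<le> a i j * \<omega>m" if "b i j < 0"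
    using restriction
  proof cases
    case nonneg
    then show ?thesis using \<open>P i j\<close> that by force
  next
    case signed
    then show ?thesis using signed_bound min that by fastforce
  qed
qed

lemma bounded_Suc_mono_le:
  assumes "\<And>i. i < s \<Longrightarrow> c i \<le> c (Suc i)" and "j \<le> i" "i \<le> s"
  shows "c j \<le> (c i :: 'a :: preorder)"
  using assms(2,3)
proof (induction i rule: dec_induct)
  case (step i)
  then show ?case using assms(1)[of i] order_trans by auto
qed simp

theorem theorem3p1:
  fixes L :: "real^'m^'m" and f :: "real \<Rightarrow> real"
    and \<rho> \<tau> \<omega>p \<omega>m :: real and s :: nat
    and \<alpha> \<beta> :: "nat \<Rightarrow> nat \<Rightarrow> real" and c :: "nat \<Rightarrow> real"
    and u :: "nat \<Rightarrow> real^'m"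
  assumes L_contr: "\<And>\<omega>. \<omega> > 0 \<Longrightarrow> mnorm_inf (mat_exp (\<omega> *\<^sub>R L)) \<le> 1"
    and rho_pos: "\<rho> > 0"
    and tau_pos: "\<tau> > 0"
    and Fplus: "\<omega>p > 0"
        "\<And>\<xi> \<omega>. \<bar>\<xi>\<bar> \<le> \<rho> \<Longrightarrow> 0 < \<omega> \<Longrightarrow> \<omega> \<le> \<omega>p \<Longrightarrow> \<bar>\<xi> + \<omega> * f \<xi>\<bar> \<le> \<rho>"
    and Fminus: "\<omega>m > 0"
        "\<And>\<xi> \<omega>. \<bar>\<xi>\<bar> \<le> \<rho> \<Longrightarrow> 0 < \<omega> \<Longrightarrow> \<omega> \<le> \<omega>m \<Longrightarrow> \<bar>\<xi> - \<omega> * f \<xi>\<bar> \<le> \<rho>"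
    and alpha_nonneg: "\<And>i j. 1 \<le> i \<Longrightarrow> i \<le> s \<Longrightarrow> j < i \<Longrightarrow> \<alpha> i j \<ge> 0"
    and alpha_sum: "\<And>i. 1 \<le> i \<Longrightarrow> i \<le> s \<Longrightarrow> (\<Sum>j<i. \<alpha> i j) = 1"
    and beta_zero: "\<And>i j. 1 \<le> i \<Longrightarrow> i \<le> s \<Longrightarrow> j < i \<Longrightarrow> \<alpha> i j = 0 \<Longrightarrow> \<beta> i j = 0"
    and c_mono: "\<And>i. i < s \<Longrightarrow> c i \<le> c (Suc i)"
    and u0: "vnorm_inf (u 0) \<le> \<rho>"
    and stages: "\<And>i. 1 \<le> i \<Longrightarrow> i \<le> s \<Longrightarrow>
        u i = (\<Sum>j<i. mat_exp (((c i - c j) * \<tau>) *\<^sub>R L)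
                 *v (\<alpha> i j *\<^sub>R u j + (\<tau> * \<beta> i j) *\<^sub>R fvec f (u j)))"
    and step_restr:
      "((\<forall>i j. 1 \<le> i \<and> i \<le> s \<and> j < i \<longrightarrow> \<beta> i j \<ge> 0) \<and>
          (\<forall>i j. 1 \<le> i \<and> i \<le> s \<and> j < i \<and> \<beta> i j > 0 \<longrightarrow> \<tau> \<le> (\<alpha> i j / \<beta> i j) * \<omega>p))
       \<or> ((\<exists>i j. 1 \<le> i \<and> i \<le> s \<and> j < i \<and> \<beta> i j < 0) \<and>
          (\<forall>i j. 1 \<le> i \<and> i \<le> s \<and> j < i \<and> \<beta> i j \<noteq> 0 \<longrightarrow>
              \<tau> \<le> (\<alpha> i j / \<bar>\<beta> i j\<bar>) * min \<omega>p \<omega>m))"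
  shows "\<forall>i\<le>s. vnorm_inf (u i) \<le> \<rho>"
proof (intro allI impI)
  fix i assume "i \<le> s"
  then show "vnorm_inf (u i) \<le> \<rho>"
  proof (induction i rule: less_induct)
    case (less i)
    show ?case
    proof (cases "i = 0")
      case False
      then have i: "1 \<le> i" "i \<le> s" using less.prems by auto
      show ?thesis unfolding stages[OF i]
      proof (rule vnorm_inf_convex_combination_le)
        fix j assume "j \<in> {..<i}"
        then have j: "j < i" by simp
        have \<alpha>: "0 \<le> \<alpha> i j" using alpha_nonneg[OF i j] .
        note step_bounds = step_restriction_bounds[where P = "\<lambda>i j. 1 \<le> i \<and> i \<le> s \<and> j < i",
            unfolded conj_assoc, OF step_restr _ \<alpha>]
        show "mnorm_inf (mat_exp (((c i - c j) * \<tau>) *\<^sub>R L)) \<le> 1"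
          using bounded_Suc_mono_le[of s c j i, OF c_mono] j i tau_pos
          by (intro mnorm_inf_mat_exp_le_1[OF L_contr]) simp_all
        show "vnorm_inf (\<alpha> i j *\<^sub>R u j + (\<tau> * \<beta> i j) *\<^sub>R fvec f (u j)) \<le> \<alpha> i j * \<rho>"
          using less.IH[of j] j i step_bounds
          by (intro vnorm_inf_euler_combination_le[OF Fplus(2) Fminus(2) _ \<alpha> tau_pos]) simp_all
      qed (use alpha_sum[OF i] in simp)
    qed (use u0 in simp)
  qed
qed

end
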